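(* Let $N$, $i$, $k$ be positive integers with $k\le N$ and $N/(i+1)\le k\le N/i$, and suppose $N$ is a multiple of every integer in $[2,i]$. Then $$I_N\!\left(\frac{1}{k}\right)=2+N\sum_{j=1}^{i}\frac{\varphi(j)}{j}-k\,\Phi(i),$$ where $\Phi(i)=\sum_{j=1}^{i}\varphi(j)$.
   Context: $\varphi$ is Euler's totient function and $\Phi(i)=\sum_{j=1}^{i}\varphi(j)$ is the totient summatory function (equivalently $|F_i|-1$). For a positive integer $N$, the Farey sequence of order $N$, $F_N$, is the increasing list of all reduced fractions $h/k$ with $0\le h\le k\le N$ and $\gcd(h,k)=1$; it begins with $0/1$ and ends with $1/1$. For $x\in F_N$, $I_N(x)$ denotes the position of $x$ in $F_N$, indexed starting from $1$ (so $I_N(0/1)=1$). *)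

theory Defs
  imports "HOL-Number_Theory.Number_Theory"
begin

text \<open>Farey sequence of order N as a set of rationals: reduced fractions h/k with
  0 <= h <= k <= N.\<close>
definition farey :: "nat \<Rightarrow> rat set" where
  "farey N = {r. 0 \<le> r \<and> r \<le> 1 \<and> snd (quotient_of r) \<le> int N}"

text \<open>Position (1-indexed) of x in the increasingly sorted Farey sequence F_N.\<close>
definition farey_index :: "nat \<Rightarrow> rat \<Rightarrow> nat" where
  "farey_index N x = card {y \<in> farey N. y \<le> x}"

definition totient_sum :: "nat \<Rightarrow> nat" where
  "totient_sum i = (\<Sum>j=1..i. totient j)"

end

theory Submission
  imports Defs
begin

(* Every element of F_N that is at most 1/k is a reduced fraction h/q
   with q \<le> N and h*k \<le> q, so I_N(1/k) counts the pairs (h, q) of this kind.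
   Splitting by the numerator h: the pair (0, 1) contributes once, and for h \<ge> 1
   the admissible denominators are the q in [h*k, N] coprime to h.  The hypothesis
   N/(i+1) \<le> k forces h \<le> i (the single candidate h = i+1, q = N fails coprimality),
   and since h divides N the interval (h*k, N] is a union of N/h - k full blocks of
   length h, each containing exactly \<phi>(h) integers coprime to h; the endpoint h*k
   counts only for h = 1.  Summing N*\<phi>(h)/h - k*\<phi>(h) over h = 1..i gives the formula.
   The file first proves the block count, then the reduction of farey_index to
   counting pairs, the per-numerator count, and the bound on numerators; the
   theorem is the resulting sum. *)

text \<open>One block of length a, starting at a multiple of a, contains exactly \<phi>(a)
  integers coprime to a, because coprimality to a only depends on the residue.\<close>

lemma card_coprime_block:
  fixes a m :: nat
  shows "card {q. m*a < q \<and> q \<le> m*a + a \<and> coprime a q} = totient a"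
proof -
  have shift: "coprime a (m*a + r) \<longleftrightarrow> coprime a r" for r
    by (simp only: coprime_iff_gcd_eq_1 gcd_add_mult)
  have "{q. m*a < q \<and> q \<le> m*a + a \<and> coprime a q} = (\<lambda>r. m*a + r) ` totatives a"
  proof (intro equalityI subsetI)
    fix q assume q: "q \<in> {q. m*a < q \<and> q \<le> m*a + a \<and> coprime a q}"
    then have q_eq: "q = m*a + (q - m*a)" by simp
    then have "coprime a (q - m*a)" using q shift[of "q - m*a"] by simp
    then have "q - m*a \<in> totatives a" using q by (auto simp: in_totatives_iff coprime_commute)
    then show "q \<in> (\<lambda>r. m*a + r) ` totatives a" using q_eq by blast
  next
    fix q assume "q \<in> (\<lambda>r. m*a + r) ` totatives a"
    then obtain r where "r \<in> totatives a" and q_eq: "q = m*a + r" by blast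
    then have r: "0 < r" "r \<le> a" "coprime a r"
      by (simp_all add: in_totatives_iff coprime_commute)
    then show "q \<in> {q. m*a < q \<and> q \<le> m*a + a \<and> coprime a q}"
      using shift[of r] unfolding q_eq by simp
  qed
  then show ?thesis
    unfolding totient_def by (simp add: card_image inj_on_def)
qed

lemma card_coprime_blocks:
  fixes a c n :: nat
  shows "card {q. c*a < q \<and> q \<le> (c+n)*a \<and> coprime a q} = n * totient a"
proof (induction n)
  case 0
  then show ?case by simp
next
  case (Suc n)
  let ?A = "{q. c*a < q \<and> q \<le> (c+n)*a \<and> coprime a q}"
  let ?B = "{q. (c+n)*a < q \<and> q \<le> (c+n)*a + a \<and> coprime a q}"
  have split: "{q. c*a < q \<and> q \<le> (c + Suc n)*a \<and> coprime a q} = ?A \<union> ?B"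
    using le_less_trans[of "c*a" "(c+n)*a"] by auto
  have "card (?A \<union> ?B) = card ?A + card ?B"
    by (rule card_Un_disjoint) (auto intro: finite_subset[of _ "{..(c+n)*a + a}"])
  then show ?case
    using Suc.IH card_coprime_block[of "c+n" a] by (simp only: split) simp
qed

lemma quotient_of_nat_fraction:
  assumes "0 < q" "coprime h q"
  shows "quotient_of (of_nat h / of_nat q :: rat) = (int h, int q)"
proof -
  have "(of_nat h / of_nat q :: rat) = Fract (int h) (int q)"
    by (simp add: Fract_of_int_quotient)
  moreover have "quotient_of (Fract (int h) (int q)) = (int h, int q)"
    unfolding quotient_of_Fract using assms by (intro normalize_stable) auto
  ultimately show ?thesis by simp
qed

definition farey_pairs_below :: "nat \<Rightarrow> nat \<Rightarrow> (nat \<times> nat) set" where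
  "farey_pairs_below N k = {(h, q). 0 < q \<and> q \<le> N \<and> coprime h q \<and> h*k \<le> q}"

text \<open>Taking fractions h/q is a bijection from these pairs onto the part of F_N
  below 1/k, so I_N(1/k) is their number.\<close>

lemma farey_index_inverse_eq_card:
  assumes k: "k > 0"
  shows "farey_index N (1 / of_nat k) = card (farey_pairs_below N k)"
proof -
  let ?f = "\<lambda>(h::nat, q::nat). (of_nat h / of_nat q :: rat)"
  have "bij_betw ?f (farey_pairs_below N k) {y \<in> farey N. y \<le> 1 / of_nat k}"
  proof (rule bij_betwI')
    fix x y assume "x \<in> farey_pairs_below N k" "y \<in> farey_pairs_below N k"
    then obtain h q h' q' where x: "x = (h, q)" "0 < q" "coprime h q"
      and y: "y = (h', q')" "0 < q'" "coprime h' q'"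
      unfolding farey_pairs_below_def by auto
    show "(?f x = ?f y) = (x = y)"
    proof
      assume "?f x = ?f y"
      then have "quotient_of (?f x) = quotient_of (?f y)" by simp
      then show "x = y" using x y quotient_of_nat_fraction by simp
    qed simp
  next
    fix x assume "x \<in> farey_pairs_below N k"
    then obtain h q where x: "x = (h, q)" "0 < q" "q \<le> N" "coprime h q" "h*k \<le> q"
      unfolding farey_pairs_below_def by auto
    have "h \<le> h*k" using k by simp
    then have "h \<le> q" using x(5) by linarith
    then have "(of_nat h / of_nat q :: rat) \<le> 1" using x(2) by simp
    moreover have "(of_nat h / of_nat q :: rat) \<le> 1 / of_nat k"
    proof -
      have "rat_of_nat (h*k) \<le> of_nat q" using x(5) by (simp only: of_nat_le_iff)
      then show ?thesis using x(2) k by (simp add: field_simps)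
    qed
    ultimately show "?f x \<in> {y \<in> farey N. y \<le> 1 / of_nat k}"
      using x quotient_of_nat_fraction[OF x(2) x(4)] by (simp add: farey_def)
  next
    fix y assume "y \<in> {y \<in> farey N. y \<le> 1 / of_nat k}"
    then have y: "0 \<le> y" "y \<le> 1 / of_nat k" "snd (quotient_of y) \<le> int N"
      by (auto simp: farey_def)
    obtain p d where pd: "quotient_of y = (p, d)" by fastforce
    have d0: "d > 0" and cp: "coprime p d" and y_eq: "y = of_int p / of_int d"
      using pd quotient_of_denom_pos quotient_of_coprime quotient_of_div by blast+
    have p0: "p \<ge> 0" using y(1) d0 y_eq by (simp add: zero_le_divide_iff)
    have "of_int p * of_nat k \<le> (of_int d :: rat)"
      using y(2) y_eq d0 k by (simp add: field_simps)
    then have "of_int (p * int k) \<le> (of_int d :: rat)" by simp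
    then have pk: "p * int k \<le> d" by (simp only: of_int_le_iff)
    define h q where "h = nat p" and "q = nat d"
    have hq: "int h = p" "int q = d" using p0 d0 by (auto simp: h_def q_def)
    have "int (h*k) \<le> int q" using pk hq by simp
    then have "h*k \<le> q" by linarith
    moreover have "0 < q" "q \<le> N" using d0 y(3) pd hq by auto
    moreover have "coprime h q" using cp hq by (metis coprime_int_iff)
    ultimately have "(h, q) \<in> farey_pairs_below N k"
      unfolding farey_pairs_below_def by blast
    moreover have "y = ?f (h, q)" using y_eq by (simp flip: hq)
    ultimately show "\<exists>x\<in>farey_pairs_below N k. y = ?f x" by blast
  qed
  then show ?thesis
    unfolding farey_index_def by (simp add: bij_betw_same_card)
qed

definition farey_denoms_below :: "nat \<Rightarrow> nat \<Rightarrow> nat \<Rightarrow> nat set" where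
  "farey_denoms_below N k h = {q. h*k \<le> q \<and> q \<le> N \<and> coprime h q}"

text \<open>If h divides N and h*k \<le> N, then (h*k, N] consists of N/h - k full blocks of
  length h; the endpoint h*k is coprime to h only when h = 1.\<close>

lemma card_farey_denoms_below:
  assumes "0 < h" "h dvd N" "h*k \<le> N"
  shows "card (farey_denoms_below N k h) = (if h = 1 then 1 else 0) + (N div h - k) * totient h"
proof -
  define d where "d = N div h"
  have N_dh: "N = d*h" using assms(2) by (simp add: d_def)
  then have "k \<le> d" using assms(1,3) by (simp add: mult.commute)
  then have N_eq: "N = (k + (d - k))*h" using N_dh by simp
  let ?A = "{q. k*h < q \<and> q \<le> (k + (d - k))*h \<and> coprime h q}"
  let ?E = "{q. q = h*k \<and> coprime h q}"
  have split: "farey_denoms_below N k h = ?A \<union> ?E"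
    unfolding farey_denoms_below_def N_eq by (auto simp: mult.commute)
  have endpoint: "card ?E = (if h = 1 then 1 else 0)"
    by (cases "h = 1") auto
  have "card (?A \<union> ?E) = card ?A + card ?E"
    by (rule card_Un_disjoint) (auto intro: finite_subset[of _ "{..(k + (d - k))*h}"])
  then show ?thesis
    using card_coprime_blocks[of k h "d - k"] endpoint by (simp add: split d_def)
qed

lemma real_card_farey_denoms_below:
  assumes "0 < h" "h dvd N" "h*k \<le> N"
  shows "real (card (farey_denoms_below N k h))
       = (if h = 1 then 1 else 0) + real N * (real (totient h) / real h) - real k * real (totient h)"
proof -
  have "k \<le> N div h" using assms by (metis dvd_mult_div_cancel mult_le_cancel1)
  then have "real (N div h - k) = real N / real h - real k"
    using assms(2) by (simp add: of_nat_diff real_of_nat_div)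
  then have "real ((N div h - k) * totient h)
      = real N * (real (totient h) / real h) - real k * real (totient h)"
    by (simp only: of_nat_mult) (simp add: algebra_simps)
  then show ?thesis
    using card_farey_denoms_below[OF assms] by simp
qed

text \<open>If N \<le> (i+1)*k, a nonzero numerator h of a pair exceeds i only for h = i+1,
  q = N = (i+1)*k, which is not coprime; so the pairs are (0, 1) together with the
  pairs whose numerator lies in 1..i.\<close>

lemma farey_pairs_below_split:
  assumes "0 < N" "0 < i" and N_le: "N \<le> (i+1)*k"
  shows "farey_pairs_below N k = insert (0, 1) (Sigma {1..i} (farey_denoms_below N k))"
proof -
  have k: "0 < k" using assms(1) N_le by (cases k) auto
  have numerator_le: "h \<le> i" if "0 < h" "q \<le> N" "coprime h q" "h*k \<le> q" for h q
  proof (rule ccontr)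
    assume "\<not> h \<le> i"
    then have "(i+1)*k \<le> h*k" by (intro mult_le_mono1) simp
    then have "h*k = (i+1)*k" and q: "q = (i+1)*k" using N_le that(2,4) by linarith+
    then have "h = i+1" using k mult_cancel2[of h k "i+1"] by linarith
    then have "coprime (i+1) ((i+1)*k)" using that(3) q by simp
    then have "coprime (i+1) (i+1)" by (simp only: coprime_mult_right_iff)
    then show False using assms(2) by simp
  qed
  show ?thesis
  proof (intro equalityI subsetI)
    fix x assume "x \<in> farey_pairs_below N k"
    then obtain h q where x: "x = (h, q)" "0 < q" "q \<le> N" "coprime h q" "h*k \<le> q"
      unfolding farey_pairs_below_def by auto
    then show "x \<in> insert (0, 1) (Sigma {1..i} (farey_denoms_below N k))"
      using numerator_le[of h q] by (cases "h = 0") (auto simp: farey_denoms_below_def)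
  next
    fix x assume "x \<in> insert (0, 1) (Sigma {1..i} (farey_denoms_below N k))"
    moreover have "0 < q" if "1 \<le> h" "h*k \<le> q" for h q
      using that k by (metis le_trans less_le_trans mult_le_mono1 mult_1 zero_less_one)
    ultimately show "x \<in> farey_pairs_below N k"
      using assms(1) by (auto simp: farey_pairs_below_def farey_denoms_below_def)
  qed
qed

theorem theorem3:
  fixes N i k :: nat
  assumes "N > 0" "i > 0" "k > 0" "k \<le> N"
    and "real N / real (i + 1) \<le> real k" "real k \<le> real N / real i"
    and "\<forall>j\<in>{2..i}. j dvd N"
  shows "real (farey_index N (1 / of_nat k))
       = 2 + real N * (\<Sum>j=1..i. real (totient j) / real j) - real k * real (totient_sum i)"
proof -
  have N_le: "N \<le> (i+1)*k"
    using assms(5) by (simp add: field_simps flip: of_nat_mult of_nat_le_iff)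
  have ik_le: "i*k \<le> N"
    using assms(2,6) by (simp add: field_simps flip: of_nat_mult of_nat_le_iff)
  let ?B = "farey_denoms_below N k"
  have finite_B: "finite (?B h)" for h
    unfolding farey_denoms_below_def by (rule finite_subset[of _ "{..N}"]) auto
  have "card (farey_pairs_below N k) = 1 + (\<Sum>h=1..i. card (?B h))"
    using finite_B by (simp add: farey_pairs_below_split[OF assms(1,2) N_le] card_SigmaI)
  moreover have "real (card (?B h))
      = (if h = 1 then 1 else 0) + real N * (real (totient h) / real h) - real k * real (totient h)"
    if "h \<in> {1..i}" for h
  proof (rule real_card_farey_denoms_below)
    show "h dvd N" using that assms(7) by (cases "h = 1") auto
    show "h*k \<le> N" using that ik_le by (meson atLeastAtMost_iff le_trans mult_le_mono1)
  qed (use that in simp)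
  ultimately have "real (card (farey_pairs_below N k))
      = 1 + (\<Sum>h=1..i. (if h = 1 then 1 else 0) + real N * (real (totient h) / real h)
                        - real k * real (totient h))"
    by simp
  also have "\<dots> = 2 + real N * (\<Sum>j=1..i. real (totient j) / real j) - real k * real (totient_sum i)"
    using assms(2) by (simp add: sum.distrib sum_subtractf sum_distrib_left totient_sum_def)
  finally show ?thesis
    by (simp add: farey_index_inverse_eq_card[OF assms(3)])
qed

end
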